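(* For each $i\in\{1,\dots,n\}$ let $D_i\in\mathbb{R}^{d\times m}$, let $\Gamma_i\in\mathbb{R}^{m\times m}$ be diagonal with entries in $\{0,1\}$, and let a linear basis warp $(\beta_i,Z_i,\mu_i)$ with $\mu_i\ge0$ be given, with $\mathcal{B}_i=\mathcal{B}_i(D_i)$ and $M_i=\mathcal{B}_i\Gamma_i\Gamma_i\mathcal{B}_i^{\top}+\mu_iZ_i^{\top}Z_i$ invertible. Let $P_i=\Gamma_i-\Gamma_i\mathcal{B}_i^{\top}M_i^{-1}\mathcal{B}_i\Gamma_i$ and $\mathcal{P}_{III}=\sum_iP_i$. If every warp contains free-translations, then $\mathcal{P}_{III}\mathbf{1}=0$, $P_i\mathbf{1}=0$ for all $i$, and for every $i$ there exists $x_i$ with $\Gamma_i\mathcal{B}_i^{\top}x_i=\Gamma_i\mathbf{1}$ and, if $\mu_i>0$, $Z_ix_i=0$. In particular these conclusions hold whenever each warp is the affine transformation ($\beta(p)=[p^{\top},1]^{\top}$, $\mu_i=0$) or a TPS warp.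
   Context: A linear basis warp (LBW) $(\beta,Z,\mu)$ with feature map $\beta:\mathbb{R}^d\to\mathbb{R}^l$ is the map $p\mapsto W^{\top}\beta(p)$, $W\in\mathbb{R}^{l\times d}$, regularized by $\mu\|ZW\|_F^2$; for $D=[p_1,\dots,p_m]$, $\mathcal{B}(D)=[\beta(p_1),\dots,\beta(p_m)]$. It contains free-translations if there is $x\in\mathbb{R}^l$ with $\beta(p)^{\top}x=1$ for all $p\in\mathbb{R}^d$ and, if $\mu>0$, $Zx=0$. TPS warp ($d\in\{2,3\}$): control centers $c_1,\dots,c_l\in\mathbb{R}^d$, parameter $\lambda$, kernel $\phi(r)=r^2\log(r^2)$ ($d=2$) or $\phi(r)=-|r|$ ($d=3$); $K_\lambda\in\mathbb{R}^{l\times l}$ with diagonal $\lambda$ and $(K_\lambda)_{jk}=\phi(\|c_j-c_k\|)$ off the diagonal; $\tilde{C}=[\tilde{c}_1,\dots,\tilde{c}_l]$, $\tilde{c}_j=[c_j^{\top},1]^{\top}$; $K_\lambda$ and $\tilde{C}K_\lambda^{-1}\tilde{C}^{\top}$ assumed invertible; $\bar{\mathcal{E}}_\lambda=K_\lambda^{-1}-K_\lambda^{-1}\tilde{C}^{\top}(\tilde{C}K_\lambda^{-1}\tilde{C}^{\top})^{-1}\tilde{C}K_\lambda^{-1}$ (bending energy matrix, positive semidefinite in the paper's setting); $\mathcal{E}_\lambda=\begin{bmatrix}\bar{\mathcal{E}}_\lambda\\ (\tilde{C}K_\lambda^{-1}\tilde{C}^{\top})^{-1}\tilde{C}K_\lambda^{-1}\end{bmatrix}$;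 $\beta(p)=\mathcal{E}_\lambda^{\top}\begin{bmatrix}\phi_p\\ \tilde{p}\end{bmatrix}$ with $\phi_p=[\phi(\|p-c_j\|)]_{j=1}^l$, $\tilde{p}=[p^{\top},1]^{\top}$; $Z=\sqrt{\bar{\mathcal{E}}_\lambda}$ (symmetric PSD square root), $\mu\ge0$. $\mathbf{1}\in\mathbb{R}^m$ is the all-ones vector. *)

theory Defs
  imports Complex_Main "Jordan_Normal_Form.Matrix"
begin

definition minv :: "real mat \<Rightarrow> real mat" where
  "minv A = (THE B. B \<in> carrier_mat (dim_row A) (dim_row A) \<and> A * B = 1\<^sub>m (dim_row A) \<and> B * A = 1\<^sub>m (dim_row A))"

fun msum :: "nat \<Rightarrow> nat \<Rightarrow> (nat \<Rightarrow> real mat) \<Rightarrow> nat \<Rightarrow> real mat" where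
  "msum nr nc f 0 = 0\<^sub>m nr nc"
| "msum nr nc f (Suc n) = msum nr nc f n + f n"

definition ones_vec :: "nat \<Rightarrow> real vec" where
  "ones_vec m = vec m (\<lambda>_. 1)"

definition basis_mat :: "nat \<Rightarrow> (real vec \<Rightarrow> real vec) \<Rightarrow> real mat \<Rightarrow> real mat" where
  "basis_mat l \<beta> D = mat l (dim_col D) (\<lambda>(j,k). \<beta> (col D k) $ j)"

definition lbw :: "nat \<Rightarrow> nat \<Rightarrow> (real vec \<Rightarrow> real vec) \<Rightarrow> real mat \<Rightarrow> real \<Rightarrow> bool" where
  "lbw d l \<beta> Z \<mu> \<longleftrightarrow> (\<forall>p\<in>carrier_vec d. \<beta> p \<in> carrier_vec l) \<and> dim_col Z = l"

definition contains_free_translations ::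
  "nat \<Rightarrow> nat \<Rightarrow> (real vec \<Rightarrow> real vec) \<Rightarrow> real mat \<Rightarrow> real \<Rightarrow> bool" where
  "contains_free_translations d l \<beta> Z \<mu> \<longleftrightarrow>
     (\<exists>x\<in>carrier_vec l. (\<forall>p\<in>carrier_vec d. \<beta> p \<bullet> x = 1) \<and>
        (\<mu> > 0 \<longrightarrow> Z *\<^sub>v x = 0\<^sub>v (dim_row Z)))"

definition affine_warp :: "nat \<Rightarrow> nat \<Rightarrow> (real vec \<Rightarrow> real vec) \<Rightarrow> real mat \<Rightarrow> real \<Rightarrow> bool" where
  "affine_warp d l \<beta> Z \<mu> \<longleftrightarrow> l = d + 1 \<and> \<mu> = 0 \<and>
     (\<forall>p\<in>carrier_vec d. \<beta> p = p @\<^sub>v ones_vec 1)"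

definition vnorm :: "real vec \<Rightarrow> real" where
  "vnorm v = sqrt (v \<bullet> v)"

definition tps_phi :: "nat \<Rightarrow> real \<Rightarrow> real" where
  "tps_phi d r = (if d = 2 then r\<^sup>2 * ln (r\<^sup>2) else - \<bar>r\<bar>)"

definition tps_K :: "nat \<Rightarrow> nat \<Rightarrow> (nat \<Rightarrow> real vec) \<Rightarrow> real \<Rightarrow> real mat" where
  "tps_K d l c lam = mat l l (\<lambda>(j,k). if j = k then lam else tps_phi d (vnorm (c j - c k)))"

definition tps_Ctil :: "nat \<Rightarrow> nat \<Rightarrow> (nat \<Rightarrow> real vec) \<Rightarrow> real mat" where
  "tps_Ctil d l c = mat (d + 1) l (\<lambda>(i,j). if i < d then c j $ i else 1)"

definition tps_Ebar :: "nat \<Rightarrow> nat \<Rightarrow> (nat \<Rightarrow> real vec) \<Rightarrow> real \<Rightarrow> real mat" where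
  "tps_Ebar d l c lam =
     (let Ki = minv (tps_K d l c lam); C = tps_Ctil d l c
      in Ki - Ki * C\<^sup>T * minv (C * Ki * C\<^sup>T) * C * Ki)"

definition tps_E :: "nat \<Rightarrow> nat \<Rightarrow> (nat \<Rightarrow> real vec) \<Rightarrow> real \<Rightarrow> real mat" where
  "tps_E d l c lam =
     (let Ki = minv (tps_K d l c lam); C = tps_Ctil d l c
      in tps_Ebar d l c lam @\<^sub>r (minv (C * Ki * C\<^sup>T) * C * Ki))"

definition tps_beta :: "nat \<Rightarrow> nat \<Rightarrow> (nat \<Rightarrow> real vec) \<Rightarrow> real \<Rightarrow> real vec \<Rightarrow> real vec" where
  "tps_beta d l c lam p =
     (tps_E d l c lam)\<^sup>T *\<^sub>v (vec l (\<lambda>j. tps_phi d (vnorm (p - c j))) @\<^sub>v (p @\<^sub>v ones_vec 1))"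

definition psd :: "real mat \<Rightarrow> bool" where
  "psd A \<longleftrightarrow> A \<in> carrier_mat (dim_row A) (dim_row A) \<and> A\<^sup>T = A \<and>
     (\<forall>x\<in>carrier_vec (dim_row A). x \<bullet> (A *\<^sub>v x) \<ge> 0)"

definition is_psd_sqrt :: "real mat \<Rightarrow> real mat \<Rightarrow> bool" where
  "is_psd_sqrt Z A \<longleftrightarrow> psd Z \<and> dim_row Z = dim_row A \<and> Z * Z = A"

definition tps_warp :: "nat \<Rightarrow> nat \<Rightarrow> (real vec \<Rightarrow> real vec) \<Rightarrow> real mat \<Rightarrow> real \<Rightarrow> bool" where
  "tps_warp d l \<beta> Z \<mu> \<longleftrightarrow> (\<exists>c lam.
     (d = 2 \<or> d = 3) \<and> (\<forall>j<l. c j \<in> carrier_vec d) \<and>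
     invertible_mat (tps_K d l c lam) \<and>
     invertible_mat (tps_Ctil d l c * minv (tps_K d l c lam) * (tps_Ctil d l c)\<^sup>T) \<and>
     is_psd_sqrt Z (tps_Ebar d l c lam) \<and> \<mu> \<ge> 0 \<and>
     (\<forall>p\<in>carrier_vec d. \<beta> p = tps_beta d l c lam p))"

definition lbw_M :: "nat \<Rightarrow> (real vec \<Rightarrow> real vec) \<Rightarrow> real mat \<Rightarrow> real \<Rightarrow> real mat \<Rightarrow> real mat \<Rightarrow> real mat" where
  "lbw_M l \<beta> Z \<mu> D \<Gamma> = basis_mat l \<beta> D * \<Gamma> * \<Gamma> * (basis_mat l \<beta> D)\<^sup>T + \<mu> \<cdot>\<^sub>m (Z\<^sup>T * Z)"

definition lbw_P :: "nat \<Rightarrow> (real vec \<Rightarrow> real vec) \<Rightarrow> real mat \<Rightarrow> real \<Rightarrow> real mat \<Rightarrow> real mat \<Rightarrow> real mat" where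
  "lbw_P l \<beta> Z \<mu> D \<Gamma> = \<Gamma> - \<Gamma> * (basis_mat l \<beta> D)\<^sup>T * minv (lbw_M l \<beta> Z \<mu> D \<Gamma>) * basis_mat l \<beta> D * \<Gamma>"

end

theory Submission
  imports Defs
begin

(* A free translation x (beta p . x = 1 for all p, and Z x = 0 if mu > 0) satisfies B^T x = 1,
   and the regulariser annihilates it. Since Gamma is an idempotent 0/1 diagonal matrix,
   M x = B Gamma Gamma B^T x = B Gamma 1, so M^-1 B Gamma 1 = x and
   P 1 = Gamma 1 - Gamma B^T x = 0; summing over i gives P_III 1 = 0.
   The affine warp has the last unit vector as free translation. For a TPS warp take
   x = C~^T e_(d+1), the all-ones vector: by the Schur-complement shape of E_lambda, the block
   Ebar_lambda kills x and the lower block maps it back to e_(d+1), so beta p . x = p~ . e_(d+1) = 1,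
   and Z x = 0 because |Z x|^2 = x^T Ebar_lambda x = 0. *)

lemma scalar_prod_self_eq_0_iff:
  fixes v :: "real vec"
  assumes "v \<in> carrier_vec n"
  shows "v \<bullet> v = 0 \<longleftrightarrow> v = 0\<^sub>v n"
proof -
  have "conjugate v = v" by (intro eq_vecI) auto
  then show ?thesis using conjugate_square_eq_0_vec[OF assms] by simp
qed

lemma gram_mult_vec_eq_0_imp_mult_vec_eq_0:
  fixes Z :: "real mat"
  assumes Z: "Z \<in> carrier_mat r l" and x: "x \<in> carrier_vec l"
    and ZZx: "(Z\<^sup>T * Z) *\<^sub>v x = 0\<^sub>v l"
  shows "Z *\<^sub>v x = 0\<^sub>v r"
proof -
  have "(Z *\<^sub>v x) \<bullet> (Z *\<^sub>v x) = x \<bullet> ((Z\<^sup>T * Z) *\<^sub>v x)"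
    using Z x transpose_vec_mult_scalar[OF Z x, of "Z *\<^sub>v x"] comm_scalar_prod[of x l]
    by (auto simp: assoc_mult_mat_vec[of _ l r])
  also have "\<dots> = 0" using ZZx x by simp
  finally show ?thesis using scalar_prod_self_eq_0_iff[of "Z *\<^sub>v x" r] Z x by auto
qed

(* Unlike assoc_mult_mat_vec, the side conditions do not mention the inner dimension,
   so the simplifier can discharge them. *)
lemma assoc_mult_mat_vec_dim:
  assumes "dim_col A = dim_row B" "dim_col B = dim_vec v"
  shows "A * B *\<^sub>v v = A *\<^sub>v (B *\<^sub>v v)"
  by (rule assoc_mult_mat_vec[of _ "dim_row A" "dim_row B" _ "dim_col B"])
    (use assms in \<open>auto intro: carrier_matI carrier_vecI\<close>)

lemma smult_mat_mult_vec:
  fixes A :: "'a :: comm_ring mat"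
  assumes A: "A \<in> carrier_mat nr nc" and v: "v \<in> carrier_vec nc"
  shows "(k \<cdot>\<^sub>m A) *\<^sub>v v = k \<cdot>\<^sub>v (A *\<^sub>v v)"
proof (rule eq_vecI)
  fix i assume "i < dim_vec (k \<cdot>\<^sub>v (A *\<^sub>v v))"
  then have i: "i < nr" using A by simp
  then have "row A i \<in> carrier_vec nc" using A by simp
  then show "((k \<cdot>\<^sub>m A) *\<^sub>v v) $ i = (k \<cdot>\<^sub>v (A *\<^sub>v v)) $ i"
    using i A smult_scalar_prod_distrib[OF _ v] by simp
qed (use A in simp)

lemma minv_inverse:
  assumes A: "A \<in> carrier_mat n n" and inv: "invertible_mat A"
  shows "minv A \<in> carrier_mat n n" and "A * minv A = 1\<^sub>m n" and "minv A * A = 1\<^sub>m n"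
proof -
  obtain B where AB: "A * B = 1\<^sub>m (dim_row A)" and BA: "B * A = 1\<^sub>m (dim_row B)"
    using inv unfolding invertible_mat_def inverts_mat_def by blast
  have "dim_col B = n" using arg_cong[OF AB, of dim_col] A by simp
  moreover have "dim_row B = n" using arg_cong[OF BA, of dim_col] A by simp
  ultimately have B: "B \<in> carrier_mat n n" by (rule carrier_matI[rotated])
  have AB': "A * B = 1\<^sub>m n" and BA': "B * A = 1\<^sub>m n" using AB BA A B by simp_all
  have "minv A = B" unfolding minv_def
  proof (rule the_equality)
    fix C assume "C \<in> carrier_mat (dim_row A) (dim_row A) \<and> A * C = 1\<^sub>m (dim_row A) \<and> C * A = 1\<^sub>m (dim_row A)"
    then have C: "C \<in> carrier_mat n n" and CA: "C * A = 1\<^sub>m n" using A by simp_all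
    have "C = C * (A * B)" using C AB' by simp
    also have "\<dots> = (C * A) * B" using assoc_mult_mat[OF C A B] by simp
    finally show "C = B" using CA B by simp
  qed (use A B AB' BA' in simp)
  then show "minv A \<in> carrier_mat n n" "A * minv A = 1\<^sub>m n" "minv A * A = 1\<^sub>m n"
    using B AB' BA' by simp_all
qed

lemma diagonal_01_mat_idempotent:
  fixes G :: "real mat"
  assumes G: "G \<in> carrier_mat m m" and diag: "diagonal_mat G"
    and entries: "\<forall>k<m. G $$ (k,k) \<in> {0,1}"
  shows "G * G = G"
proof (rule eq_matI)
  fix i j assume "i < dim_row G" "j < dim_col G"
  then have ij: "i < m" "j < m" using G by auto
  have "(G * G) $$ (i,j) = (\<Sum>k<m. G $$ (i,k) * G $$ (k,j))"
    using G ij by (simp add: scalar_prod_def atLeast0LessThan)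
  also have "\<dots> = (\<Sum>k<m. if k = i then G $$ (i,i) * G $$ (i,j) else 0)"
    using diag G ij by (intro sum.cong) (auto simp: diagonal_mat_def)
  also have "\<dots> = G $$ (i,i) * G $$ (i,j)" using ij by simp
  also have "\<dots> = G $$ (i,j)"
    using entries diag G ij by (cases "i = j") (auto simp: diagonal_mat_def)
  finally show "(G * G) $$ (i,j) = G $$ (i,j)" .
qed (use G in auto)

lemma msum_carrier:
  assumes "\<forall>i<n. f i \<in> carrier_mat nr nc"
  shows "msum nr nc f n \<in> carrier_mat nr nc"
  using assms by (induction n) auto

lemma msum_mult_vec_eq_0:
  assumes f: "\<forall>i<n. f i \<in> carrier_mat nr nc" and v: "v \<in> carrier_vec nc"
    and fv: "\<forall>i<n. f i *\<^sub>v v = 0\<^sub>v nr"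
  shows "msum nr nc f n *\<^sub>v v = 0\<^sub>v nr"
  using f fv
proof (induction n)
  case (Suc n)
  then show ?case
    using v msum_carrier[of n f nr nc] by (simp add: add_mult_distrib_mat_vec[of _ nr nc])
qed (use v in auto)

lemma projector_mult_translation_eq_0:
  fixes B G R :: "real mat"
  assumes B: "B \<in> carrier_mat l m" and G: "G \<in> carrier_mat m m" and GG: "G * G = G"
    and R: "R \<in> carrier_mat l l" and x: "x \<in> carrier_vec l"
    and Rx: "R *\<^sub>v x = 0\<^sub>v l" and Bx: "B\<^sup>T *\<^sub>v x = v"
    and inv: "invertible_mat (B * G * G * B\<^sup>T + R)"
  shows "(G - G * B\<^sup>T * minv (B * G * G * B\<^sup>T + R) * B * G) *\<^sub>v v = 0\<^sub>v m"
proof -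
  define M where "M = B * G * G * B\<^sup>T + R"
  have BGGB: "B * G * G * B\<^sup>T \<in> carrier_mat l l" using B G by (intro mult_carrier_mat) auto
  have M: "M \<in> carrier_mat l l" unfolding M_def using BGGB R by simp
  note Mi = minv_inverse[OF M inv[folded M_def]]
  have v: "v \<in> carrier_vec m" unfolding Bx[symmetric] using B x by (intro mult_mat_vec_carrier) auto
  have Gv: "G *\<^sub>v v \<in> carrier_vec m" using G v by (rule mult_mat_vec_carrier)
  have BGv: "B *\<^sub>v (G *\<^sub>v v) \<in> carrier_vec l" using B Gv by (rule mult_mat_vec_carrier)
  have GGv: "G *\<^sub>v (G *\<^sub>v v) = G *\<^sub>v v"
    using assoc_mult_mat_vec[OF G G v] by (simp add: GG)
  have "M *\<^sub>v x = (B * G * G * B\<^sup>T) *\<^sub>v x + R *\<^sub>v x"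
    unfolding M_def using BGGB R x by (rule add_mult_distrib_mat_vec)
  also have "(B * G * G * B\<^sup>T) *\<^sub>v x = B *\<^sub>v (G *\<^sub>v v)"
    using B G v x by (auto simp: Bx GGv assoc_mult_mat_vec_dim simp del: assoc_mult_mat)
  finally have "M *\<^sub>v x = B *\<^sub>v (G *\<^sub>v v)" using BGv by (simp add: Rx)
  then have Mi_BGv: "minv M *\<^sub>v (B *\<^sub>v (G *\<^sub>v v)) = x"
    using assoc_mult_mat_vec[OF Mi(1) M x] Mi(3) x by simp
  have Q: "G * B\<^sup>T * minv M * B * G \<in> carrier_mat m m" using B G Mi by (intro mult_carrier_mat) auto
  have "(G * B\<^sup>T * minv M * B * G) *\<^sub>v v = G *\<^sub>v (B\<^sup>T *\<^sub>v (minv M *\<^sub>v (B *\<^sub>v (G *\<^sub>v v))))"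
    using B G Mi v by (auto simp: assoc_mult_mat_vec_dim simp del: assoc_mult_mat)
  also have "\<dots> = G *\<^sub>v v" by (simp only: Mi_BGv Bx)
  finally show ?thesis
    unfolding M_def[symmetric] using minus_mult_distrib_mat_vec[OF G Q v] Gv by simp
qed

lemma smult_gram_mult_vec_eq_0:
  fixes Z :: "real mat"
  assumes Z: "Z \<in> carrier_mat r l" and x: "x \<in> carrier_vec l"
    and Zx: "\<mu> = 0 \<or> Z *\<^sub>v x = 0\<^sub>v r"
  shows "(\<mu> \<cdot>\<^sub>m (Z\<^sup>T * Z)) *\<^sub>v x = 0\<^sub>v l"
proof -
  have ZT: "Z\<^sup>T \<in> carrier_mat l r" using Z by simp
  have "(\<mu> \<cdot>\<^sub>m (Z\<^sup>T * Z)) *\<^sub>v x = \<mu> \<cdot>\<^sub>v (Z\<^sup>T *\<^sub>v (Z *\<^sub>v x))"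
    using smult_mat_mult_vec[OF mult_carrier_mat[OF ZT Z] x] assoc_mult_mat_vec[OF ZT Z x] by simp
  also from Zx have "\<dots> = 0\<^sub>v l"
  proof
    assume "\<mu> = 0"
    then show ?thesis using ZT by (intro eq_vecI) simp_all
  next
    assume "Z *\<^sub>v x = 0\<^sub>v r"
    then have "Z\<^sup>T *\<^sub>v (Z *\<^sub>v x) = 0\<^sub>v l" using ZT by (intro eq_vecI) simp_all
    then show ?thesis by (intro eq_vecI) simp_all
  qed
  finally show ?thesis .
qed

lemma schur_complement_mult_transpose:
  fixes Ki C Gi :: "real mat"
  assumes Ki: "Ki \<in> carrier_mat l l" and C: "C \<in> carrier_mat k l" and Gi: "Gi \<in> carrier_mat k k"
    and inv: "Gi * (C * Ki * C\<^sup>T) = 1\<^sub>m k" and e: "e \<in> carrier_vec k"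
  shows "(Gi * C * Ki) *\<^sub>v (C\<^sup>T *\<^sub>v e) = e"
    and "(Ki - Ki * C\<^sup>T * Gi * C * Ki) *\<^sub>v (C\<^sup>T *\<^sub>v e) = 0\<^sub>v l"
proof -
  have CTe: "C\<^sup>T *\<^sub>v e \<in> carrier_vec l" using C e by (intro mult_mat_vec_carrier) auto
  have "e = (Gi * (C * Ki * C\<^sup>T)) *\<^sub>v e" using inv e by simp
  then have nested: "Gi *\<^sub>v (C *\<^sub>v (Ki *\<^sub>v (C\<^sup>T *\<^sub>v e))) = e"
    using Ki C Gi e by (auto simp: assoc_mult_mat_vec_dim simp del: assoc_mult_mat)
  then show "(Gi * C * Ki) *\<^sub>v (C\<^sup>T *\<^sub>v e) = e"
    using Ki C Gi e by (auto simp: assoc_mult_mat_vec_dim simp del: assoc_mult_mat)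
  have "(Ki * C\<^sup>T * Gi * C * Ki) *\<^sub>v (C\<^sup>T *\<^sub>v e) = Ki *\<^sub>v (C\<^sup>T *\<^sub>v e)"
    using Ki C Gi e nested by (auto simp: assoc_mult_mat_vec_dim simp del: assoc_mult_mat)
  moreover have "Ki * C\<^sup>T * Gi * C * Ki \<in> carrier_mat l l"
    using Ki C Gi by (intro mult_carrier_mat) auto
  moreover have "Ki *\<^sub>v (C\<^sup>T *\<^sub>v e) \<in> carrier_vec l" using Ki CTe by (rule mult_mat_vec_carrier)
  ultimately show "(Ki - Ki * C\<^sup>T * Gi * C * Ki) *\<^sub>v (C\<^sup>T *\<^sub>v e) = 0\<^sub>v l"
    using Ki CTe by (simp add: minus_mult_distrib_mat_vec)
qed

lemma basis_mat_transpose_mult_translation: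
  assumes lbw: "lbw d l \<beta> Z \<mu>" and D: "D \<in> carrier_mat d m" and x: "x \<in> carrier_vec l"
    and \<beta>x: "\<forall>p\<in>carrier_vec d. \<beta> p \<bullet> x = 1"
  shows "(basis_mat l \<beta> D)\<^sup>T *\<^sub>v x = ones_vec m"
proof (rule eq_vecI)
  fix k assume "k < dim_vec (ones_vec m)"
  then have k: "k < m" by (simp add: ones_vec_def)
  have D_k: "col D k \<in> carrier_vec d" using D k by simp
  then have "\<beta> (col D k) \<in> carrier_vec l" using lbw unfolding lbw_def by blast
  then have "col (basis_mat l \<beta> D) k = \<beta> (col D k)"
    using D k unfolding basis_mat_def by (intro eq_vecI) simp_all
  then show "((basis_mat l \<beta> D)\<^sup>T *\<^sub>v x) $ k = ones_vec m $ k"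
    using D k \<beta>x D_k by (simp add: basis_mat_def ones_vec_def)
qed (use D in \<open>simp add: basis_mat_def ones_vec_def\<close>)

lemma lbw_P_mult_ones:
  assumes lbw: "lbw d l \<beta> Z \<mu>" and \<mu>: "\<mu> \<ge> 0" and D: "D \<in> carrier_mat d m"
    and G: "G \<in> carrier_mat m m" and GG: "G * G = G"
    and inv: "invertible_mat (lbw_M l \<beta> Z \<mu> D G)"
    and ft: "contains_free_translations d l \<beta> Z \<mu>"
  shows "lbw_P l \<beta> Z \<mu> D G *\<^sub>v ones_vec m = 0\<^sub>v m"
proof -
  obtain x where x: "x \<in> carrier_vec l" and \<beta>x: "\<forall>p\<in>carrier_vec d. \<beta> p \<bullet> x = 1"
    and Zx: "\<mu> > 0 \<longrightarrow> Z *\<^sub>v x = 0\<^sub>v (dim_row Z)"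
    using ft unfolding contains_free_translations_def by blast
  have Z: "Z \<in> carrier_mat (dim_row Z) l" using lbw unfolding lbw_def by (intro carrier_matI) simp_all
  have B: "basis_mat l \<beta> D \<in> carrier_mat l m" using D by (simp add: basis_mat_def)
  have ZT: "Z\<^sup>T \<in> carrier_mat l (dim_row Z)" using Z by (simp only: transpose_carrier_mat)
  have R: "\<mu> \<cdot>\<^sub>m (Z\<^sup>T * Z) \<in> carrier_mat l l" using mult_carrier_mat[OF ZT Z] by simp
  have "\<mu> = 0 \<or> Z *\<^sub>v x = 0\<^sub>v (dim_row Z)" using Zx \<mu> by linarith
  note Rx = smult_gram_mult_vec_eq_0[OF Z x this]
  show ?thesis unfolding lbw_P_def lbw_M_def
    using projector_mult_translation_eq_0[OF B G GG R x Rx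
        basis_mat_transpose_mult_translation[OF lbw D x \<beta>x] inv[unfolded lbw_M_def]] .
qed

lemma lbw_P_carrier:
  assumes "G \<in> carrier_mat m m"
  shows "lbw_P l \<beta> Z \<mu> D G \<in> carrier_mat m m"
  unfolding lbw_P_def using assms by (intro minus_carrier_mat carrier_matI) simp_all

lemma lbw_free_translation_fits_data:
  assumes lbw: "lbw d l \<beta> Z \<mu>" and D: "D \<in> carrier_mat d m" and G: "G \<in> carrier_mat m m"
    and ft: "contains_free_translations d l \<beta> Z \<mu>"
  shows "\<exists>x\<in>carrier_vec l. G * (basis_mat l \<beta> D)\<^sup>T *\<^sub>v x = G *\<^sub>v ones_vec m \<and>
           (\<mu> > 0 \<longrightarrow> Z *\<^sub>v x = 0\<^sub>v (dim_row Z))"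
proof -
  obtain x where x: "x \<in> carrier_vec l" and \<beta>x: "\<forall>p\<in>carrier_vec d. \<beta> p \<bullet> x = 1"
    and Zx: "\<mu> > 0 \<longrightarrow> Z *\<^sub>v x = 0\<^sub>v (dim_row Z)"
    using ft unfolding contains_free_translations_def by blast
  have BT: "(basis_mat l \<beta> D)\<^sup>T \<in> carrier_mat m l" using D by (simp add: basis_mat_def)
  have "G * (basis_mat l \<beta> D)\<^sup>T *\<^sub>v x = G *\<^sub>v ones_vec m"
    unfolding assoc_mult_mat_vec[OF G BT x] basis_mat_transpose_mult_translation[OF lbw D x \<beta>x] ..
  then show ?thesis using x Zx by blast
qed

lemma append_one_scalar_prod_unit_vec:
  assumes "p \<in> carrier_vec d"
  shows "(p @\<^sub>v ones_vec 1) \<bullet> unit_vec (d + 1) d = 1"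
  using assms by (simp add: ones_vec_def)

lemma affine_warp_contains_free_translations:
  assumes "affine_warp d l \<beta> Z \<mu>"
  shows "contains_free_translations d l \<beta> Z \<mu>"
proof -
  have l: "l = d + 1" and \<mu>: "\<mu> = 0" and \<beta>: "\<forall>p\<in>carrier_vec d. \<beta> p = p @\<^sub>v ones_vec 1"
    using assms unfolding affine_warp_def by simp_all
  have "\<forall>p\<in>carrier_vec d. \<beta> p \<bullet> unit_vec (d + 1) d = 1"
    using \<beta> append_one_scalar_prod_unit_vec by simp
  then show ?thesis unfolding contains_free_translations_def l \<mu>
    by (intro bexI[of _ "unit_vec (d + 1) d"]) simp_all
qed

lemma tps_warp_contains_free_translations:
  assumes "tps_warp d l \<beta> Z \<mu>"
  shows "contains_free_translations d l \<beta> Z \<mu>"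
proof -
  obtain c lam where invK: "invertible_mat (tps_K d l c lam)"
    and invG: "invertible_mat (tps_Ctil d l c * minv (tps_K d l c lam) * (tps_Ctil d l c)\<^sup>T)"
    and sqrt: "is_psd_sqrt Z (tps_Ebar d l c lam)"
    and \<beta>: "\<forall>p\<in>carrier_vec d. \<beta> p = tps_beta d l c lam p"
    using assms unfolding tps_warp_def by blast
  define C where "C = tps_Ctil d l c"
  define Ki where "Ki = minv (tps_K d l c lam)"
  define Gi where "Gi = minv (C * Ki * C\<^sup>T)"
  define e :: "real vec" where "e = unit_vec (d + 1) d"
  define x where "x = C\<^sup>T *\<^sub>v e"
  have C: "C \<in> carrier_mat (d + 1) l" unfolding C_def tps_Ctil_def by simp
  have CT: "C\<^sup>T \<in> carrier_mat l (d + 1)" using C by simp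
  have Ki: "Ki \<in> carrier_mat l l"
    unfolding Ki_def by (rule minv_inverse(1)[OF _ invK]) (simp add: tps_K_def)
  have CKC: "C * Ki * C\<^sup>T \<in> carrier_mat (d + 1) (d + 1)"
    using mult_carrier_mat[OF mult_carrier_mat[OF C Ki] CT] .
  note Gi = minv_inverse[OF CKC invG[folded C_def Ki_def], folded Gi_def]
  have e: "e \<in> carrier_vec (d + 1)" unfolding e_def by simp
  have x: "x \<in> carrier_vec l" unfolding x_def using CT e by (rule mult_mat_vec_carrier)
  note schur = schur_complement_mult_transpose[OF Ki C Gi(1) Gi(3) e, folded x_def]
  have Ebar: "tps_Ebar d l c lam = Ki - Ki * C\<^sup>T * Gi * C * Ki"
    unfolding tps_Ebar_def Let_def C_def Ki_def Gi_def ..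
  have lower: "Gi * C * Ki \<in> carrier_mat (d + 1) l"
    using mult_carrier_mat[OF mult_carrier_mat[OF Gi(1) C] Ki] .
  have "Ki * C\<^sup>T * Gi \<in> carrier_mat l (d + 1)"
    using mult_carrier_mat[OF mult_carrier_mat[OF Ki CT] Gi(1)] .
  then have "Ki * C\<^sup>T * Gi * C * Ki \<in> carrier_mat l l"
    using mult_carrier_mat[OF mult_carrier_mat[OF _ C] Ki] by blast
  then have Ebar_carrier: "tps_Ebar d l c lam \<in> carrier_mat l l"
    unfolding Ebar by (rule minus_carrier_mat)
  have E: "tps_E d l c lam = tps_Ebar d l c lam @\<^sub>r (Gi * C * Ki)"
    unfolding tps_E_def Let_def C_def Ki_def Gi_def ..
  have E_carrier: "tps_E d l c lam \<in> carrier_mat (l + (d + 1)) l"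
    unfolding E using Ebar_carrier lower by (rule carrier_append_rows)
  have Ex: "tps_E d l c lam *\<^sub>v x = 0\<^sub>v l @\<^sub>v e"
    unfolding E mat_mult_append[OF Ebar_carrier lower x] using schur by (simp add: Ebar)
  have "\<beta> p \<bullet> x = 1" if p: "p \<in> carrier_vec d" for p
  proof -
    define \<phi> where "\<phi> = vec l (\<lambda>j. tps_phi d (vnorm (p - c j)))"
    define q where "q = p @\<^sub>v ones_vec 1"
    have q: "q \<in> carrier_vec (d + 1)"
      unfolding q_def using p by (intro append_carrier_vec) (simp_all add: ones_vec_def)
    have \<phi>: "\<phi> \<in> carrier_vec l" unfolding \<phi>_def by simp
    have w: "\<phi> @\<^sub>v q \<in> carrier_vec (l + (d + 1))" using \<phi> q by (rule append_carrier_vec)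
    have "\<beta> p \<bullet> x = ((tps_E d l c lam)\<^sup>T *\<^sub>v (\<phi> @\<^sub>v q)) \<bullet> x"
      using \<beta> p by (simp add: tps_beta_def \<phi>_def q_def)
    also have "\<dots> = (\<phi> @\<^sub>v q) \<bullet> (tps_E d l c lam *\<^sub>v x)"
      by (rule transpose_vec_mult_scalar[OF E_carrier x w])
    also have "\<dots> = q \<bullet> e"
      unfolding Ex scalar_prod_append[OF \<phi> q zero_carrier_vec e] using \<phi> by simp
    also have "\<dots> = 1" unfolding q_def e_def using p by (rule append_one_scalar_prod_unit_vec)
    finally show ?thesis .
  qed
  moreover have "Z *\<^sub>v x = 0\<^sub>v (dim_row Z)"
  proof -
    have "psd Z" and Z_dim: "dim_row Z = l" and ZZ: "Z * Z = tps_Ebar d l c lam"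
      using sqrt Ebar_carrier unfolding is_psd_sqrt_def by auto
    then have Z: "Z \<in> carrier_mat l l" and "Z\<^sup>T = Z" unfolding psd_def by auto
    then have "(Z\<^sup>T * Z) *\<^sub>v x = 0\<^sub>v l" using schur(2) by (simp add: ZZ Ebar)
    then show ?thesis using gram_mult_vec_eq_0_imp_mult_vec_eq_0[OF Z x] Z_dim by simp
  qed
  ultimately show ?thesis unfolding contains_free_translations_def using x by blast
qed

theorem proposition6:
  fixes n d m :: nat
    and D \<Gamma> Z :: "nat \<Rightarrow> real mat"
    and \<beta> :: "nat \<Rightarrow> real vec \<Rightarrow> real vec"
    and l :: "nat \<Rightarrow> nat"
    and \<mu> :: "nat \<Rightarrow> real"
  assumes D: "\<forall>i<n. D i \<in> carrier_mat d m"
    and Gam: "\<forall>i<n. \<Gamma> i \<in> carrier_mat m m \<and> diagonal_mat (\<Gamma> i) \<and>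
                    (\<forall>k<m. \<Gamma> i $$ (k,k) \<in> {0,1})"
    and warp: "\<forall>i<n. lbw d (l i) (\<beta> i) (Z i) (\<mu> i) \<and> \<mu> i \<ge> 0"
    and Minv: "\<forall>i<n. invertible_mat (lbw_M (l i) (\<beta> i) (Z i) (\<mu> i) (D i) (\<Gamma> i))"
    and ft: "(\<forall>i<n. contains_free_translations d (l i) (\<beta> i) (Z i) (\<mu> i))
             \<or> (\<forall>i<n. affine_warp d (l i) (\<beta> i) (Z i) (\<mu> i) \<or> tps_warp d (l i) (\<beta> i) (Z i) (\<mu> i))"
  defines "P \<equiv> \<lambda>i. lbw_P (l i) (\<beta> i) (Z i) (\<mu> i) (D i) (\<Gamma> i)"
  shows "msum m m P n *\<^sub>v ones_vec m = 0\<^sub>v m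
    \<and> (\<forall>i<n. P i *\<^sub>v ones_vec m = 0\<^sub>v m)
    \<and> (\<forall>i<n. \<exists>x\<in>carrier_vec (l i). \<Gamma> i * (basis_mat (l i) (\<beta> i) (D i))\<^sup>T *\<^sub>v x = \<Gamma> i *\<^sub>v ones_vec m \<and>
                 (\<mu> i > 0 \<longrightarrow> Z i *\<^sub>v x = 0\<^sub>v (dim_row (Z i))))"
proof -
  have free: "contains_free_translations d (l i) (\<beta> i) (Z i) (\<mu> i)" if "i < n" for i
    using ft that affine_warp_contains_free_translations tps_warp_contains_free_translations by blast
  have idem: "\<Gamma> i * \<Gamma> i = \<Gamma> i" if "i < n" for i
    using Gam that diagonal_01_mat_idempotent by blast
  have P_ones: "\<forall>i<n. P i *\<^sub>v ones_vec m = 0\<^sub>v m"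
  proof (intro allI impI)
    fix i assume i: "i < n"
    show "P i *\<^sub>v ones_vec m = 0\<^sub>v m"
      unfolding P_def using warp D Gam Minv i
      by (intro lbw_P_mult_ones[OF _ _ _ _ idem[OF i] _ free[OF i]]) auto
  qed
  have P_carrier: "\<forall>i<n. P i \<in> carrier_mat m m"
    unfolding P_def using Gam lbw_P_carrier by blast
  have "msum m m P n *\<^sub>v ones_vec m = 0\<^sub>v m"
    using msum_mult_vec_eq_0[OF P_carrier _ P_ones] by (simp add: ones_vec_def)
  moreover have "\<forall>i<n. \<exists>x\<in>carrier_vec (l i). \<Gamma> i * (basis_mat (l i) (\<beta> i) (D i))\<^sup>T *\<^sub>v x = \<Gamma> i *\<^sub>v ones_vec m \<and>
                 (\<mu> i > 0 \<longrightarrow> Z i *\<^sub>v x = 0\<^sub>v (dim_row (Z i)))"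
    using D Gam warp by (auto intro!: lbw_free_translation_fits_data free)
  ultimately show ?thesis using P_ones by blast
qed

end
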